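(* Let $k>0$. If a deterministic KAT automaton $A$ is obtained through (repeated) composition from deterministic KAT automata each having strictly fewer than $k$ states, then $L(A)\ne L_k$. Precisely: let $\mathcal{C}_k$ be the smallest class of deterministic KAT automata (over arbitrary finite alphabets) that contains every deterministic KAT automaton with fewer than $k$ states and is closed under the following: whenever $A\in\mathcal{C}_k$ is over $(\Sigma_0,T_0)$, $\mathfrak{t}:T_0\to\mathsf{BA}(T_1)$, and $\mathfrak{s}$ assigns to each $p\in\Sigma_0$ an automaton $\mathfrak{s}(p)\in\mathcal{C}_k$ over $(\Sigma_1,T_1)$, then $\mathsf{compose}^{\mathfrak{s}}_{\mathfrak{t}}(A)\in\mathcal{C}_k$. Then no automaton in $\mathcal{C}_k$ recognizes $L_k$.
   Context: Atoms $\mathsf{At}_T=2^T$ for finite test set $T$; $\mathsf{BA}(T)$: Boolean expressions over $T$; $\alpha\le b$ means $b$ holds under the assignment making exactly the tests in $\alpha$ true. Guarded strings: words in $\mathsf{At}_T(\Sigma\mathsf{At}_T)^*$. A deterministic KAT automaton over $(\Sigma,T)$ is $A=(Q,\delta,\iota)$, $Q$ finite, $\delta:Q\times\mathsf{At}_T\to\{\mathsf{accept},\mathsf{reject}\}+\Sigma\times Q$, $\iota:\mathsf{At}_T\to\{\mathsf{accept},\mathsf{reject}\}+\Sigma\times Q$. For $\gamma$ of the type of $\iota$, $L_A(\gamma)$ is the smallest set with: $\gamma(\alpha)=\mathsf{accept}\Rightarrow\alpha\in L_A(\gamma)$; $\gamma(\alpha)=(p,q)$ and $w\in L_A(\delta(q,-))\Rightarrow\alpha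 pw\in L_A(\gamma)$. $L(A)=L_A(\iota)$; $A$ recognizes $L(A)$. Composition. (1) For $\mathfrak{t}:T_0\to\mathsf{BA}(T_1)$, $A=(Q,\delta,\iota)$ over $(\Sigma,T_0)$: $\mathfrak{t}^{-1}(\beta)\in\mathsf{At}_{T_0}$ is the atom with $t\in\mathfrak{t}^{-1}(\beta)$ iff $\beta\le\mathfrak{t}(t)$; $\mathsf{compose}_{\mathfrak{t}}(A)=(Q,\delta',\iota')$ over $(\Sigma,T_1)$, $\delta'(q,\beta)=\delta(q,\mathfrak{t}^{-1}(\beta))$, $\iota'(\beta)=\iota(\mathfrak{t}^{-1}(\beta))$. (2) For $A=(Q,\delta,\iota)$ over $(\Sigma_0,T)$ and $\mathfrak{s}(p)=(Q_p,\delta_p,\iota_p)$ over $(\Sigma_1,T)$ for $p\in\Sigma_0$: $\hat\delta(q,\alpha)=\mathsf{accept}$ if $\delta(q,\alpha)=\mathsf{accept}$; $=(p,q')$ if $\delta(q,\alpha)=(p,q')$ and $\iota_p(\alpha)\ne\mathsf{accept}$; $=\hat\delta(q',\alpha)$ if $\delta(q,\alpha)=(p,q')$ and $\iota_p(\alpha)=\mathsf{accept}$; $=\mathsf{reject}$ otherwise (including non-terminating recursion). $\hat\iota(\alpha)=\hat\delta(q,\alpha)$ if $\iota(\alpha)=(p,q)$ and $\iota_p(\alpha)=\mathsf{accept}$, else $\iota(\alpha)$. $\mathsf{compose}^{\mathfrak{s}}(A)=(Q',\delta',\iota')$ over $(\Sigma_1,T)$, $Q'=\sum_{p\in\Sigma_0}Q_p\times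 Q$; for $q_p\in Q_p,q\in Q$: $\delta'((q_p,q),\alpha)=(p'',(q_p',q))$ if $\delta_p(q_p,\alpha)=(p'',q_p')$; $=(p'',(q_{p'},q'))$ if $\delta_p(q_p,\alpha)=\mathsf{accept}$, $\hat\delta(q,\alpha)=(p',q')$, $\iota_{p'}(\alpha)=(p'',q_{p'})$; $=\mathsf{accept}$ if $\delta_p(q_p,\alpha)=\mathsf{accept}=\hat\delta(q,\alpha)$; $=\mathsf{reject}$ otherwise. $\iota'(\alpha)=\mathsf{accept}$ if $\hat\iota(\alpha)=\mathsf{accept}$; $=(p'',(q_{p'},q))$ if $\hat\iota(\alpha)=(p',q)$ and $\iota_{p'}(\alpha)=(p'',q_{p'})$; $=\mathsf{reject}$ otherwise. (3) $\mathsf{compose}^{\mathfrak{s}}_{\mathfrak{t}}(A)=\mathsf{compose}^{\mathfrak{s}}(\mathsf{compose}_{\mathfrak{t}}(A))$. $L_k$: over $T=\{t_1,\dots,t_k\}$, $\Sigma=\{p_1,\dots,p_k\}$, with $\alpha_i=\{t_i\}$, $L_k$ is the set of guarded strings $\alpha_{i_1}\,p_1\,\alpha_{i_2}\,p_{i_1}\,\alpha_{i_3}\,p_{i_2}\cdots\alpha_{i_n}\,p_{i_{n-1}}\,\alpha_{i_n}$ with $n\ge1$, $i_j\in\{1,\dots,k\}$, $i_1\ne1$, and $i_j\ne i_{j+1}$ for all $j<n$ (the $j$-th atom $\alpha_{i_j}$, $j\le n$, is followed by $p_{i_{j-1}}$ where $i_0=1$, and the string ends with $\alpha_{i_n}$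 repeated). *)

theory Defs
  imports Main
begin

text \<open>Tests and letters are encoded as natural numbers; an atom over a finite
test set T is a subset of T (the tests that are true).  States live in a
datatype that is closed under the tagged pairing used by composition:
the composed state (p, q_p, q) of sum over p of Q_p x Q is encoded as CPair p q_p q.\<close>

datatype kstate = SBase nat | CPair nat kstate kstate

type_synonym atom = "nat set"

datatype outcome = Acc | Rej | Go nat kstate

record kat_aut =
  alph   :: "nat set"
  tests  :: "nat set"
  states :: "kstate set"
  delta  :: "kstate \<Rightarrow> atom \<Rightarrow> outcome"
  iota   :: "atom \<Rightarrow> outcome"

definition good_outcome :: "nat set \<Rightarrow> kstate set \<Rightarrow> outcome \<Rightarrow> bool" where
  "good_outcome S Q r \<longleftrightarrow> (r = Acc \<or> r = Rej \<or> (\<exists>p q. r = Go p q \<and> p \<in> S \<and> q \<in> Q))"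

definition wf_aut :: "kat_aut \<Rightarrow> bool" where
  "wf_aut A \<longleftrightarrow> finite (alph A) \<and> finite (tests A) \<and> finite (states A) \<and>
     (\<forall>q\<in>states A. \<forall>\<alpha>. \<alpha> \<subseteq> tests A \<longrightarrow> good_outcome (alph A) (states A) (delta A q \<alpha>)) \<and>
     (\<forall>\<alpha>. \<alpha> \<subseteq> tests A \<longrightarrow> good_outcome (alph A) (states A) (iota A \<alpha>))"

text \<open>A guarded string alpha_0 p_1 alpha_1 ... p_n alpha_n is encoded as
(alpha_0, [(p_1, alpha_1), ..., (p_n, alpha_n)]).\<close>
type_synonym gstring = "atom \<times> (nat \<times> atom) list"

inductive lang_of :: "kat_aut \<Rightarrow> (atom \<Rightarrow> outcome) \<Rightarrow> gstring \<Rightarrow> bool"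
  for A :: kat_aut where
  acc: "\<alpha> \<subseteq> tests A \<Longrightarrow> \<gamma> \<alpha> = Acc \<Longrightarrow> lang_of A \<gamma> (\<alpha>, [])"
| step: "\<alpha> \<subseteq> tests A \<Longrightarrow> \<gamma> \<alpha> = Go p q \<Longrightarrow> lang_of A (delta A q) (\<beta>, w)
          \<Longrightarrow> lang_of A \<gamma> (\<alpha>, (p, \<beta>) # w)"

definition L :: "kat_aut \<Rightarrow> gstring set" where
  "L A = {x. lang_of A (iota A) x}"

datatype bexp = BTrue | BFalse | BVar nat | BNot bexp | BAnd bexp bexp | BOr bexp bexp

fun bvars :: "bexp \<Rightarrow> nat set" where
  "bvars BTrue = {}" | "bvars BFalse = {}" | "bvars (BVar t) = {t}"
| "bvars (BNot b) = bvars b" | "bvars (BAnd b c) = bvars b \<union> bvars c"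
| "bvars (BOr b c) = bvars b \<union> bvars c"

text \<open>holds_at alpha b  is  alpha \<le> b.\<close>
fun holds_at :: "atom \<Rightarrow> bexp \<Rightarrow> bool" where
  "holds_at \<alpha> BTrue = True" | "holds_at \<alpha> BFalse = False"
| "holds_at \<alpha> (BVar t) = (t \<in> \<alpha>)"
| "holds_at \<alpha> (BNot b) = (\<not> holds_at \<alpha> b)"
| "holds_at \<alpha> (BAnd b c) = (holds_at \<alpha> b \<and> holds_at \<alpha> c)"
| "holds_at \<alpha> (BOr b c) = (holds_at \<alpha> b \<or> holds_at \<alpha> c)"

definition tinv :: "nat set \<Rightarrow> (nat \<Rightarrow> bexp) \<Rightarrow> atom \<Rightarrow> atom" where
  "tinv T0 \<tau> \<beta> = {t \<in> T0. holds_at \<beta> (\<tau> t)}"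

definition compose_t :: "nat set \<Rightarrow> (nat \<Rightarrow> bexp) \<Rightarrow> kat_aut \<Rightarrow> kat_aut" where
  "compose_t T1 \<tau> A =
     \<lparr> alph = alph A, tests = T1, states = states A,
       delta = (\<lambda>q \<beta>. delta A q (tinv (tests A) \<tau> \<beta>)),
       iota = (\<lambda>\<beta>. iota A (tinv (tests A) \<tau> \<beta>)) \<rparr>"

text \<open>The recursion defining hat-delta is rendered as
an inductive (functional) relation; when no finite derivation exists
(delta rejects, or the recursion does not terminate) the value is reject.\<close>
inductive hat_rel :: "kat_aut \<Rightarrow> (nat \<Rightarrow> kat_aut) \<Rightarrow> atom \<Rightarrow> kstate \<Rightarrow> outcome \<Rightarrow> bool"
  for A \<sigma> \<alpha> where
  h_acc: "delta A q \<alpha> = Acc \<Longrightarrow> hat_rel A \<sigma> \<alpha> q Acc"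
| h_go: "delta A q \<alpha> = Go p q' \<Longrightarrow> iota (\<sigma> p) \<alpha> \<noteq> Acc \<Longrightarrow> hat_rel A \<sigma> \<alpha> q (Go p q')"
| h_skip: "delta A q \<alpha> = Go p q' \<Longrightarrow> iota (\<sigma> p) \<alpha> = Acc \<Longrightarrow> hat_rel A \<sigma> \<alpha> q' r
           \<Longrightarrow> hat_rel A \<sigma> \<alpha> q r"

definition hat_delta :: "kat_aut \<Rightarrow> (nat \<Rightarrow> kat_aut) \<Rightarrow> kstate \<Rightarrow> atom \<Rightarrow> outcome" where
  "hat_delta A \<sigma> q \<alpha> = (if \<exists>r. hat_rel A \<sigma> \<alpha> q r then THE r. hat_rel A \<sigma> \<alpha> q r else Rej)"

definition hat_iota :: "kat_aut \<Rightarrow> (nat \<Rightarrow> kat_aut) \<Rightarrow> atom \<Rightarrow> outcome" where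
  "hat_iota A \<sigma> \<alpha> = (case iota A \<alpha> of
       Go p q \<Rightarrow> (if iota (\<sigma> p) \<alpha> = Acc then hat_delta A \<sigma> q \<alpha> else Go p q)
     | r \<Rightarrow> r)"

definition comp_delta :: "kat_aut \<Rightarrow> (nat \<Rightarrow> kat_aut) \<Rightarrow> kstate \<Rightarrow> atom \<Rightarrow> outcome" where
  "comp_delta A \<sigma> s \<alpha> = (case s of
      CPair p qp q \<Rightarrow>
        (case delta (\<sigma> p) qp \<alpha> of
           Go p'' qp' \<Rightarrow> Go p'' (CPair p qp' q)
         | Acc \<Rightarrow> (case hat_delta A \<sigma> q \<alpha> of
                     Acc \<Rightarrow> Acc
                   | Go p' q' \<Rightarrow> (case iota (\<sigma> p') \<alpha> of
                                    Go p'' qp' \<Rightarrow> Go p'' (CPair p' qp' q')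
                                  | _ \<Rightarrow> Rej)
                   | Rej \<Rightarrow> Rej)
         | Rej \<Rightarrow> Rej)
    | SBase _ \<Rightarrow> Rej)"

definition comp_iota :: "kat_aut \<Rightarrow> (nat \<Rightarrow> kat_aut) \<Rightarrow> atom \<Rightarrow> outcome" where
  "comp_iota A \<sigma> \<alpha> = (case hat_iota A \<sigma> \<alpha> of
       Acc \<Rightarrow> Acc
     | Go p' q \<Rightarrow> (case iota (\<sigma> p') \<alpha> of
                     Go p'' qp \<Rightarrow> Go p'' (CPair p' qp q)
                   | _ \<Rightarrow> Rej)
     | Rej \<Rightarrow> Rej)"

definition compose_s :: "nat set \<Rightarrow> (nat \<Rightarrow> kat_aut) \<Rightarrow> kat_aut \<Rightarrow> kat_aut" where
  "compose_s \<Sigma>1 \<sigma> A =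
     \<lparr> alph = \<Sigma>1, tests = tests A,
       states = {CPair p qp q | p qp q. p \<in> alph A \<and> qp \<in> states (\<sigma> p) \<and> q \<in> states A},
       delta = comp_delta A \<sigma>,
       iota = comp_iota A \<sigma> \<rparr>"

definition compose_st :: "nat set \<Rightarrow> nat set \<Rightarrow> (nat \<Rightarrow> kat_aut) \<Rightarrow> (nat \<Rightarrow> bexp) \<Rightarrow> kat_aut \<Rightarrow> kat_aut" where
  "compose_st \<Sigma>1 T1 \<sigma> \<tau> A = compose_s \<Sigma>1 \<sigma> (compose_t T1 \<tau> A)"

inductive_set Ck :: "nat \<Rightarrow> kat_aut set" for k :: nat where
  base: "wf_aut A \<Longrightarrow> card (states A) < k \<Longrightarrow> A \<in> Ck k"
| comp: "A \<in> Ck k \<Longrightarrow> finite T1 \<Longrightarrow> finite \<Sigma>1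
         \<Longrightarrow> (\<forall>t\<in>tests A. bvars (\<tau> t) \<subseteq> T1)
         \<Longrightarrow> (\<forall>p\<in>alph A. \<sigma> p \<in> Ck k \<and> alph (\<sigma> p) = \<Sigma>1 \<and> tests (\<sigma> p) = T1)
         \<Longrightarrow> compose_st \<Sigma>1 T1 \<sigma> \<tau> A \<in> Ck k"

text \<open>Tests t_i and letters p_i are encoded as the number i (1 \<le> i \<le> k), and the
atom alpha_i = {t_i} as {i}.  For the index sequence is = [i_1, ..., i_n], the
guarded string is alpha_{i_1} p_1 alpha_{i_2} p_{i_1} ... alpha_{i_n} p_{i_{n-1}} alpha_{i_n}.\<close>
definition gs_of :: "nat list \<Rightarrow> gstring" where
  "gs_of is = ({hd is}, zip (1 # butlast is) (map (\<lambda>i. {i}) (tl is @ [last is])))"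

definition Lk :: "nat \<Rightarrow> gstring set" where
  "Lk k = {gs_of is | is. is \<noteq> [] \<and> set is \<subseteq> {1..k} \<and> hd is \<noteq> 1 \<and>
                          (\<forall>j. Suc j < length is \<longrightarrow> is ! j \<noteq> is ! Suc j)}"

end

(* An automaton recognising L_k has to remember the index j of the atom it read last: from then
   on it accepts alpha_j and, on any other alpha_i, emits p_j and must remember i. A memory
   witness abstracts this: k labelled states, where a state labelled j accepts on an atom a j
   and, on a i with i <> j, emits a letter determined by j and moves to a state labelled i.
   Runs are taken on one atom and pass silently over a set Z of letters, since inside a
   composite a letter whose substituted automaton accepts at once leaves no trace.
   Test substitution only renames the atoms of a witness. For letter substitution, group the
   witness states (p, q_p, q) of the composite by (p, q): if one group carries all k labels it
   is a witness for the inner automaton sigma p; otherwise the label depends only on the outer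
   state q, and these outer states form a witness for the outer automaton, which skips the
   letters erased by the inner ones. By induction no automaton of C_k has a witness, as a
   witness needs at least k states, whereas an automaton recognising L_k has one. *)

theory Submission
  imports Defs
begin

(* There is no rule for Rej: a rejecting or non-terminating run has no result. *)
inductive skip_run :: "kat_aut \<Rightarrow> atom \<Rightarrow> (nat \<Rightarrow> bool) \<Rightarrow> outcome \<Rightarrow> outcome \<Rightarrow> bool"
  for A \<alpha> Z where
  skip_run_Acc: "skip_run A \<alpha> Z Acc Acc"
| skip_run_emit: "\<not> Z p \<Longrightarrow> skip_run A \<alpha> Z (Go p q) (Go p q)"
| skip_run_skip: "Z p \<Longrightarrow> skip_run A \<alpha> Z (delta A q \<alpha>) r \<Longrightarrow> skip_run A \<alpha> Z (Go p q) r"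

lemma skip_run_Acc_iff [simp]: "skip_run A \<alpha> Z Acc r \<longleftrightarrow> r = Acc"
  by (auto elim: skip_run.cases intro: skip_run_Acc)

lemma skip_run_Rej [simp]: "\<not> skip_run A \<alpha> Z Rej r"
  by (auto elim: skip_run.cases)

lemma skip_run_Go_iff:
  "skip_run A \<alpha> Z (Go p q) r \<longleftrightarrow>
     (\<not> Z p \<and> r = Go p q) \<or> (Z p \<and> skip_run A \<alpha> Z (delta A q \<alpha>) r)"
  by (auto elim: skip_run.cases intro: skip_run.intros)

lemma skip_run_det: "skip_run A \<alpha> Z out r \<Longrightarrow> skip_run A \<alpha> Z out r' \<Longrightarrow> r = r'"
  by (induction arbitrary: r' rule: skip_run.induct) (auto simp: skip_run_Go_iff)

lemma skip_run_enlarge: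
  assumes "skip_run A \<alpha> Z out r" and "\<And>p. Z p \<Longrightarrow> Z' p" and "skip_run A \<alpha> Z' r r'"
  shows "skip_run A \<alpha> Z' out r'"
  using assms by (induction rule: skip_run.induct) (auto simp: skip_run_Go_iff)

lemma skip_run_no_skips: "skip_run A \<alpha> (\<lambda>_. False) out r \<longleftrightarrow> out \<noteq> Rej \<and> r = out"
  by (cases out) (auto simp: skip_run_Go_iff)

lemma hat_rel_iff_skip_run:
  "hat_rel A \<sigma> \<alpha> q r \<longleftrightarrow> skip_run A \<alpha> (\<lambda>p. iota (\<sigma> p) \<alpha> = Acc) (delta A q \<alpha>) r"
proof
  show "hat_rel A \<sigma> \<alpha> q r \<Longrightarrow> skip_run A \<alpha> (\<lambda>p. iota (\<sigma> p) \<alpha> = Acc) (delta A q \<alpha>) r"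
    by (induction rule: hat_rel.induct) (auto simp: skip_run_Go_iff)
  show "skip_run A \<alpha> (\<lambda>p. iota (\<sigma> p) \<alpha> = Acc) (delta A q \<alpha>) r \<Longrightarrow> hat_rel A \<sigma> \<alpha> q r"
    by (induction "delta A q \<alpha>" r arbitrary: q rule: skip_run.induct)
      (auto intro: hat_rel.intros simp: eq_commute[of "Go _ _"])
qed

lemma hat_delta_skip_run:
  assumes "hat_delta A \<sigma> q \<alpha> = r" and "r \<noteq> Rej"
  shows "skip_run A \<alpha> (\<lambda>p. iota (\<sigma> p) \<alpha> = Acc) (delta A q \<alpha>) r"
proof -
  have "\<exists>r. hat_rel A \<sigma> \<alpha> q r"
    using assms unfolding hat_delta_def by (auto split: if_splits)
  then have "hat_rel A \<sigma> \<alpha> q (hat_delta A \<sigma> q \<alpha>)"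
    unfolding hat_delta_def hat_rel_iff_skip_run by (auto intro: theI dest: skip_run_det)
  then show ?thesis
    using assms(1) by (simp add: hat_rel_iff_skip_run)
qed

lemma compose_t_simps [simp]:
  "alph (compose_t T1 \<tau> A) = alph A" "tests (compose_t T1 \<tau> A) = T1"
  "states (compose_t T1 \<tau> A) = states A"
  "delta (compose_t T1 \<tau> A) q \<beta> = delta A q (tinv (tests A) \<tau> \<beta>)"
  "iota (compose_t T1 \<tau> A) \<beta> = iota A (tinv (tests A) \<tau> \<beta>)"
  by (simp_all add: compose_t_def)

lemma skip_run_compose_t:
  "skip_run (compose_t T1 \<tau> A) \<beta> Z out r \<longleftrightarrow> skip_run A (tinv (tests A) \<tau> \<beta>) Z out r"
proof
  show "skip_run (compose_t T1 \<tau> A) \<beta> Z out r \<Longrightarrow> skip_run A (tinv (tests A) \<tau> \<beta>) Z out r"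
    by (induction rule: skip_run.induct) (auto intro: skip_run.intros)
  show "skip_run A (tinv (tests A) \<tau> \<beta>) Z out r \<Longrightarrow> skip_run (compose_t T1 \<tau> A) \<beta> Z out r"
    by (induction rule: skip_run.induct) (auto intro: skip_run.intros)
qed

locale memory_witness =
  fixes k :: nat and A :: kat_aut and a :: "nat \<Rightarrow> atom" and Z :: "nat \<Rightarrow> nat \<Rightarrow> bool"
    and S :: "kstate set" and l :: "kstate \<Rightarrow> nat"
  assumes subset_states: "S \<subseteq> states A"
    and label_range: "s \<in> S \<Longrightarrow> l s \<in> {1..k}"
    and label_surj: "j \<in> {1..k} \<Longrightarrow> \<exists>s\<in>S. l s = j"
    and accepts: "s \<in> S \<Longrightarrow> skip_run A (a (l s)) (Z (l s)) (delta A s (a (l s))) Acc"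
    and moves: "s \<in> S \<Longrightarrow> i \<in> {1..k} \<Longrightarrow> i \<noteq> l s \<Longrightarrow>
      \<exists>b s'. s' \<in> S \<and> l s' = i \<and> skip_run A (a i) (Z i) (delta A s (a i)) (Go b s')"
    and emits_distinct: "s \<in> S \<Longrightarrow> s' \<in> S \<Longrightarrow> l s \<noteq> l s' \<Longrightarrow> i \<in> {1..k} \<Longrightarrow>
      skip_run A (a i) (Z i) (delta A s (a i)) (Go b t) \<Longrightarrow>
      skip_run A (a i) (Z i) (delta A s' (a i)) (Go b' t') \<Longrightarrow> b \<noteq> b'"

definition has_memory_witness :: "nat \<Rightarrow> kat_aut \<Rightarrow> bool" where
  "has_memory_witness k A \<longleftrightarrow> (\<exists>a Z S l. memory_witness k A a Z S l)"

lemma (in memory_witness) card_states_ge: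
  assumes "finite (states A)"
  shows "k \<le> card (states A)"
proof -
  have "{1..k} \<subseteq> l ` S"
    using label_surj by fastforce
  then have "k \<le> card (l ` S)"
    using assms subset_states by (metis card_atLeastAtMost card_mono diff_Suc_1 finite_imageI finite_subset)
  also have "\<dots> \<le> card S"
    using assms subset_states by (meson card_image_le finite_subset)
  also have "\<dots> \<le> card (states A)"
    using assms subset_states by (rule card_mono)
  finally show ?thesis .
qed

lemma has_memory_witness_compose_t:
  assumes "has_memory_witness k (compose_t T1 \<tau> A)"
  shows "has_memory_witness k A"
proof -
  obtain a Z S l where "memory_witness k (compose_t T1 \<tau> A) a Z S l"
    using assms unfolding has_memory_witness_def by blast
  then have "memory_witness k A (\<lambda>i. tinv (tests A) \<tau> (a i)) Z S l"
    unfolding memory_witness_def skip_run_compose_t compose_t_simps .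
  then show ?thesis
    unfolding has_memory_witness_def by blast
qed

lemma compose_s_simps [simp]:
  "alph (compose_s \<Sigma>1 \<sigma> A) = \<Sigma>1" "tests (compose_s \<Sigma>1 \<sigma> A) = tests A"
  "states (compose_s \<Sigma>1 \<sigma> A) =
     {CPair p qp q | p qp q. p \<in> alph A \<and> qp \<in> states (\<sigma> p) \<and> q \<in> states A}"
  "delta (compose_s \<Sigma>1 \<sigma> A) = comp_delta A \<sigma>" "iota (compose_s \<Sigma>1 \<sigma> A) = comp_iota A \<sigma>"
  by (simp_all add: compose_s_def)

(* The letters of the outer automaton that a Z-skipping run of the composite passes over. *)
definition erased :: "(nat \<Rightarrow> kat_aut) \<Rightarrow> atom \<Rightarrow> (nat \<Rightarrow> bool) \<Rightarrow> nat \<Rightarrow> bool" where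
  "erased \<sigma> \<alpha> Z p \<longleftrightarrow> skip_run (\<sigma> p) \<alpha> Z (iota (\<sigma> p) \<alpha>) Acc"

(* How a run of the composite ends once the current inner automaton has accepted. *)
definition outer_run ::
    "kat_aut \<Rightarrow> (nat \<Rightarrow> kat_aut) \<Rightarrow> atom \<Rightarrow> (nat \<Rightarrow> bool) \<Rightarrow> kstate \<Rightarrow> outcome \<Rightarrow> bool" where
  "outer_run A \<sigma> \<alpha> Z q r \<longleftrightarrow>
     (r = Acc \<and> skip_run A \<alpha> (erased \<sigma> \<alpha> Z) (delta A q \<alpha>) Acc) \<or>
     (\<exists>p q' b qp. r = Go b (CPair p qp q') \<and>
        skip_run A \<alpha> (erased \<sigma> \<alpha> Z) (delta A q \<alpha>) (Go p q') \<and>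
        skip_run (\<sigma> p) \<alpha> Z (iota (\<sigma> p) \<alpha>) (Go b qp))"

lemma hat_delta_erased_run:
  assumes "hat_delta A \<sigma> q \<alpha> = r" and "r \<noteq> Rej"
    and "skip_run A \<alpha> (erased \<sigma> \<alpha> Z) r r'"
  shows "skip_run A \<alpha> (erased \<sigma> \<alpha> Z) (delta A q \<alpha>) r'"
  using skip_run_enlarge[OF hat_delta_skip_run[OF assms(1,2)] _ assms(3)]
  by (simp add: erased_def)

lemma comp_delta_Acc:
  assumes "comp_delta A \<sigma> (CPair p qp q) \<alpha> = Acc"
  shows "delta (\<sigma> p) qp \<alpha> = Acc" and "hat_delta A \<sigma> q \<alpha> = Acc"
  using assms by (auto simp: comp_delta_def split: outcome.splits)

lemma comp_delta_Go:
  assumes "comp_delta A \<sigma> (CPair p qp q) \<alpha> = Go b t"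
  obtains (inner) qp' where "delta (\<sigma> p) qp \<alpha> = Go b qp'" and "t = CPair p qp' q"
  | (outer) p' q' qp' where "delta (\<sigma> p) qp \<alpha> = Acc" and "hat_delta A \<sigma> q \<alpha> = Go p' q'"
      and "iota (\<sigma> p') \<alpha> = Go b qp'" and "t = CPair p' qp' q'"
  using assms by (auto simp: comp_delta_def split: outcome.splits)

lemma comp_delta_inner_Go:
  "delta (\<sigma> p) qp \<alpha> = Go b qp' \<Longrightarrow> comp_delta A \<sigma> (CPair p qp q) \<alpha> = Go b (CPair p qp' q)"
  by (simp add: comp_delta_def)

lemma skip_run_compose_s_inner:
  assumes "skip_run (\<sigma> p) \<alpha> Z (delta (\<sigma> p) qp \<alpha>) (Go b qp')"
  shows "skip_run (compose_s \<Sigma>1 \<sigma> A) \<alpha> Z (comp_delta A \<sigma> (CPair p qp q) \<alpha>) (Go b (CPair p qp' q))"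
  using assms
proof (induction "delta (\<sigma> p) qp \<alpha>" "Go b qp'" arbitrary: qp rule: skip_run.induct)
  case skip_run_emit
  then show ?case
    by (metis comp_delta_inner_Go skip_run.skip_run_emit)
next
  case (skip_run_skip c x)
  then show ?case
    by (metis comp_delta_inner_Go compose_s_simps(4) skip_run.skip_run_skip)
qed

lemma outer_run_emit:
  assumes "hat_delta A \<sigma> q \<alpha> = Go p q'"
    and "skip_run (\<sigma> p) \<alpha> Z (iota (\<sigma> p) \<alpha>) (Go b qp)"
  shows "outer_run A \<sigma> \<alpha> Z q (Go b (CPair p qp q'))"
proof -
  have "\<not> erased \<sigma> \<alpha> Z p"
    using assms(2) skip_run_det unfolding erased_def by fastforce
  then have "skip_run A \<alpha> (erased \<sigma> \<alpha> Z) (delta A q \<alpha>) (Go p q')"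
    using hat_delta_erased_run[OF assms(1)] by (simp add: skip_run_emit)
  then show ?thesis
    using assms(2) unfolding outer_run_def by blast
qed

lemma outer_run_skip:
  assumes "hat_delta A \<sigma> q \<alpha> = Go p q'" and "erased \<sigma> \<alpha> Z p"
    and "outer_run A \<sigma> \<alpha> Z q' r"
  shows "outer_run A \<sigma> \<alpha> Z q r"
proof -
  have "skip_run A \<alpha> (erased \<sigma> \<alpha> Z) (delta A q \<alpha>) r'"
    if "skip_run A \<alpha> (erased \<sigma> \<alpha> Z) (delta A q' \<alpha>) r'" for r'
    using hat_delta_erased_run[OF assms(1)] that assms(2) by (simp add: skip_run_Go_iff)
  then show ?thesis
    using assms(3) unfolding outer_run_def by blast
qed

lemma skip_run_compose_s_cases:
  assumes "skip_run (compose_s \<Sigma>1 \<sigma> A) \<alpha> Z (comp_delta A \<sigma> (CPair p qp q) \<alpha>) r"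
  shows "(\<exists>b qp'. r = Go b (CPair p qp' q) \<and> skip_run (\<sigma> p) \<alpha> Z (delta (\<sigma> p) qp \<alpha>) (Go b qp')) \<or>
    (skip_run (\<sigma> p) \<alpha> Z (delta (\<sigma> p) qp \<alpha>) Acc \<and> outer_run A \<sigma> \<alpha> Z q r)"
  using assms
proof (induction "comp_delta A \<sigma> (CPair p qp q) \<alpha>" r arbitrary: p qp q rule: skip_run.induct)
  case skip_run_Acc
  then show ?case
    using comp_delta_Acc[OF sym] hat_delta_erased_run[of A \<sigma> q \<alpha> Acc Z Acc]
    unfolding outer_run_def by auto
next
  case (skip_run_emit b t)
  note emit = skip_run_emit.hyps(1)
  from skip_run_emit.hyps(2)[symmetric] show ?case
  proof (cases rule: comp_delta_Go)
    case (outer p' q' qp')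
    then show ?thesis
      using outer_run_emit[of A \<sigma> q \<alpha> p' q' Z b qp'] emit by (simp add: skip_run.skip_run_emit)
  qed (use emit in \<open>simp add: skip_run.skip_run_emit\<close>)
next
  case (skip_run_skip b t r)
  note skip = skip_run_skip.hyps(1) and IH = skip_run_skip.hyps(3)
  from skip_run_skip.hyps(4)[symmetric] show ?case
  proof (cases rule: comp_delta_Go)
    case (inner qp')
    then show ?thesis
      using skip IH[of p qp' q] by (auto simp: skip_run_Go_iff)
  next
    case (outer p' q' qp')
    have "(\<exists>b' qp''. r = Go b' (CPair p' qp'' q') \<and>
          skip_run (\<sigma> p') \<alpha> Z (iota (\<sigma> p') \<alpha>) (Go b' qp'')) \<or>
        (erased \<sigma> \<alpha> Z p' \<and> outer_run A \<sigma> \<alpha> Z q' r)"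
      using IH[of p' qp' q'] outer skip by (auto simp: skip_run_Go_iff erased_def)
    then show ?thesis
      using outer outer_run_emit outer_run_skip by (metis skip_run_Acc_iff)
  qed
qed

locale composed_memory_witness = memory_witness k "compose_s \<Sigma>1 \<sigma> B" a Z S l
  for k \<Sigma>1 \<sigma> B a Z S l
begin

abbreviation E :: "nat \<Rightarrow> nat \<Rightarrow> bool" where
  "E i \<equiv> erased \<sigma> (a i) (Z i)"

lemma S_memberE:
  assumes "s \<in> S"
  obtains p qp q where "s = CPair p qp q" and "p \<in> alph B" and "qp \<in> states (\<sigma> p)" and "q \<in> states B"
  using assms subset_states by auto

lemma accepts_CPair:
  assumes "CPair p qp q \<in> S" and "l (CPair p qp q) = j"
  shows "skip_run (\<sigma> p) (a j) (Z j) (delta (\<sigma> p) qp (a j)) Acc"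
    and "skip_run B (a j) (E j) (delta B q (a j)) Acc"
  using skip_run_compose_s_cases[OF accepts[OF assms(1), simplified]] assms(2)
  unfolding outer_run_def by auto

lemma moves_CPair:
  assumes "CPair p qp q \<in> S" and "i \<in> {1..k}" and "i \<noteq> l (CPair p qp q)"
  obtains (inner) b qp' where "CPair p qp' q \<in> S" and "l (CPair p qp' q) = i"
      and "skip_run (\<sigma> p) (a i) (Z i) (delta (\<sigma> p) qp (a i)) (Go b qp')"
  | (outer) b p' qp' q' where "CPair p' qp' q' \<in> S" and "l (CPair p' qp' q') = i"
      and "skip_run (compose_s \<Sigma>1 \<sigma> B) (a i) (Z i) (comp_delta B \<sigma> (CPair p qp q) (a i))
             (Go b (CPair p' qp' q'))"
      and "skip_run B (a i) (E i) (delta B q (a i)) (Go p' q')"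
      and "skip_run (\<sigma> p') (a i) (Z i) (iota (\<sigma> p') (a i)) (Go b qp')"
proof -
  obtain b s' where s': "s' \<in> S" "l s' = i"
    and run: "skip_run (compose_s \<Sigma>1 \<sigma> B) (a i) (Z i) (comp_delta B \<sigma> (CPair p qp q) (a i)) (Go b s')"
    using moves[OF assms] by auto
  from skip_run_compose_s_cases[OF run] show thesis
    unfolding outer_run_def using s' run that by blast
qed

lemma no_outer_move:
  assumes "CPair p qp q \<in> S" and "l (CPair p qp q) = i"
  shows "\<not> skip_run B (a i) (E i) (delta B q (a i)) (Go p' q')"
  using accepts_CPair(2)[OF assms] skip_run_det by fastforce

lemma inner_witness:
  assumes full: "\<forall>j\<in>{1..k}. \<exists>qp. CPair p qp q \<in> S \<and> l (CPair p qp q) = j"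
  shows "memory_witness k (\<sigma> p) a Z {qp. CPair p qp q \<in> S} (\<lambda>qp. l (CPair p qp q))"
proof
  fix qp qp2 i b t b2 t2
  show "{qp. CPair p qp q \<in> S} \<subseteq> states (\<sigma> p)"
    using subset_states by auto
  show "qp \<in> {qp. CPair p qp q \<in> S} \<Longrightarrow> l (CPair p qp q) \<in> {1..k}"
    using label_range by blast
  show "i \<in> {1..k} \<Longrightarrow> \<exists>qp\<in>{qp. CPair p qp q \<in> S}. l (CPair p qp q) = i"
    using full by blast
  show "qp \<in> {qp. CPair p qp q \<in> S} \<Longrightarrow>
      skip_run (\<sigma> p) (a (l (CPair p qp q))) (Z (l (CPair p qp q))) (delta (\<sigma> p) qp (a (l (CPair p qp q)))) Acc"
    using accepts_CPair(1)[OF _ refl] by blast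
  show "\<exists>b qp'. qp' \<in> {qp. CPair p qp q \<in> S} \<and> l (CPair p qp' q) = i \<and>
        skip_run (\<sigma> p) (a i) (Z i) (delta (\<sigma> p) qp (a i)) (Go b qp')"
    if moving: "qp \<in> {qp. CPair p qp q \<in> S}" "i \<in> {1..k}" "i \<noteq> l (CPair p qp q)"
  proof -
    obtain qp2 where "CPair p qp2 q \<in> S" and "l (CPair p qp2 q) = i"
      using full moving(2) by blast
    then have no_outer: "\<not> skip_run B (a i) (E i) (delta B q (a i)) (Go p' q')" for p' q'
      by (rule no_outer_move)
    have "CPair p qp q \<in> S"
      using moving(1) by simp
    then show ?thesis
      by (rule moves_CPair[OF _ moving(2,3)]) (auto simp: no_outer)
  qed
  show "qp \<in> {qp. CPair p qp q \<in> S} \<Longrightarrow> qp2 \<in> {qp. CPair p qp q \<in> S} \<Longrightarrow>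
      l (CPair p qp q) \<noteq> l (CPair p qp2 q) \<Longrightarrow> i \<in> {1..k} \<Longrightarrow>
      skip_run (\<sigma> p) (a i) (Z i) (delta (\<sigma> p) qp (a i)) (Go b t) \<Longrightarrow>
      skip_run (\<sigma> p) (a i) (Z i) (delta (\<sigma> p) qp2 (a i)) (Go b2 t2) \<Longrightarrow> b \<noteq> b2"
    using emits_distinct[of "CPair p qp q" "CPair p qp2 q" i b "CPair p t q" b2 "CPair p t2 q"]
      skip_run_compose_s_inner by simp
qed

lemma outer_move:
  assumes "CPair p qp q \<in> S" and "i \<in> {1..k}"
    and missing: "\<forall>qp'. CPair p qp' q \<in> S \<longrightarrow> l (CPair p qp' q) \<noteq> i"
  obtains b p' qp' q' where "CPair p' qp' q' \<in> S" and "l (CPair p' qp' q') = i"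
    and "skip_run (compose_s \<Sigma>1 \<sigma> B) (a i) (Z i) (comp_delta B \<sigma> (CPair p qp q) (a i))
           (Go b (CPair p' qp' q'))"
    and "skip_run B (a i) (E i) (delta B q (a i)) (Go p' q')"
    and "skip_run (\<sigma> p') (a i) (Z i) (iota (\<sigma> p') (a i)) (Go b qp')"
proof -
  have "i \<noteq> l (CPair p qp q)"
    using missing assms(1) by blast
  then show thesis
    by (rule moves_CPair[OF assms(1,2)]) (use missing that in blast)+
qed

context
  assumes no_full_fiber:
    "\<And>p qp q. CPair p qp q \<in> S \<Longrightarrow> \<exists>j\<in>{1..k}. \<forall>qp'. CPair p qp' q \<in> S \<longrightarrow> l (CPair p qp' q) \<noteq> j"
begin

lemma fiber_label_const:
  assumes s1: "CPair p qp1 q \<in> S" and s2: "CPair p qp2 q \<in> S"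
  shows "l (CPair p qp1 q) = l (CPair p qp2 q)"
proof (rule ccontr)
  assume differ: "l (CPair p qp1 q) \<noteq> l (CPair p qp2 q)"
  obtain j where j: "j \<in> {1..k}" and missing: "\<forall>qp'. CPair p qp' q \<in> S \<longrightarrow> l (CPair p qp' q) \<noteq> j"
    using no_full_fiber[OF s1] by blast
  obtain b1 p1 qp1' q1 where "CPair p1 qp1' q1 \<in> S"
    and run1: "skip_run (compose_s \<Sigma>1 \<sigma> B) (a j) (Z j) (comp_delta B \<sigma> (CPair p qp1 q) (a j))
           (Go b1 (CPair p1 qp1' q1))"
    and outer1: "skip_run B (a j) (E j) (delta B q (a j)) (Go p1 q1)"
    and init1: "skip_run (\<sigma> p1) (a j) (Z j) (iota (\<sigma> p1) (a j)) (Go b1 qp1')"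
    using outer_move[OF s1 j missing] .
  obtain b2 p2 qp2' q2 where "CPair p2 qp2' q2 \<in> S"
    and run2: "skip_run (compose_s \<Sigma>1 \<sigma> B) (a j) (Z j) (comp_delta B \<sigma> (CPair p qp2 q) (a j))
           (Go b2 (CPair p2 qp2' q2))"
    and outer2: "skip_run B (a j) (E j) (delta B q (a j)) (Go p2 q2)"
    and init2: "skip_run (\<sigma> p2) (a j) (Z j) (iota (\<sigma> p2) (a j)) (Go b2 qp2')"
    using outer_move[OF s2 j missing] .
  have "p1 = p2"
    using skip_run_det[OF outer1 outer2] by simp
  then have "b1 = b2"
    using skip_run_det[OF init1, of "Go b2 qp2'"] init2 by simp
  moreover have "b1 \<noteq> b2"
    using emits_distinct[OF s1 s2 differ j] run1 run2 by simp
  ultimately show False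
    by contradiction
qed

lemma label_missing_from_fiber:
  assumes "CPair p qp q \<in> S" and "i \<noteq> l (CPair p qp q)"
  shows "\<forall>qp'. CPair p qp' q \<in> S \<longrightarrow> l (CPair p qp' q) \<noteq> i"
  using assms fiber_label_const by metis

lemma outer_label_const:
  assumes s1: "CPair p1 qp1 q \<in> S" and s2: "CPair p2 qp2 q \<in> S"
  shows "l (CPair p1 qp1 q) = l (CPair p2 qp2 q)"
proof (rule ccontr)
  let ?j = "l (CPair p1 qp1 q)"
  assume "?j \<noteq> l (CPair p2 qp2 q)"
  with s2 obtain p' q' where "skip_run B (a ?j) (E ?j) (delta B q (a ?j)) (Go p' q')"
    using outer_move[OF s2 label_range[OF s1] label_missing_from_fiber] by metis
  with no_outer_move[OF s1 refl] show False
    by contradiction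
qed

lemma outer_emits_distinct:
  assumes s1: "CPair p1 qp1 q1 \<in> S" and s2: "CPair p2 qp2 q2 \<in> S"
    and differ: "l (CPair p1 qp1 q1) \<noteq> l (CPair p2 qp2 q2)" and i: "i \<in> {1..k}"
    and run1: "skip_run B (a i) (E i) (delta B q1 (a i)) (Go b1 t1)"
    and run2: "skip_run B (a i) (E i) (delta B q2 (a i)) (Go b2 t2)"
  shows "b1 \<noteq> b2"
proof
  assume same: "b1 = b2"
  have "i \<noteq> l (CPair p1 qp1 q1)" and "i \<noteq> l (CPair p2 qp2 q2)"
    using no_outer_move[OF s1] no_outer_move[OF s2] run1 run2 by blast+
  then obtain c1 p1' qp1' q1' c2 p2' qp2' q2' where
        C1: "skip_run (compose_s \<Sigma>1 \<sigma> B) (a i) (Z i) (comp_delta B \<sigma> (CPair p1 qp1 q1) (a i))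
           (Go c1 (CPair p1' qp1' q1'))"
    and outer1: "skip_run B (a i) (E i) (delta B q1 (a i)) (Go p1' q1')"
    and init1: "skip_run (\<sigma> p1') (a i) (Z i) (iota (\<sigma> p1') (a i)) (Go c1 qp1')"
    and C2: "skip_run (compose_s \<Sigma>1 \<sigma> B) (a i) (Z i) (comp_delta B \<sigma> (CPair p2 qp2 q2) (a i))
           (Go c2 (CPair p2' qp2' q2'))"
    and outer2: "skip_run B (a i) (E i) (delta B q2 (a i)) (Go p2' q2')"
    and init2: "skip_run (\<sigma> p2') (a i) (Z i) (iota (\<sigma> p2') (a i)) (Go c2 qp2')"
    using outer_move[OF s1 i label_missing_from_fiber[OF s1]]
      outer_move[OF s2 i label_missing_from_fiber[OF s2]] by metis
  have "p1' = b1" and "p2' = b2"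
    using skip_run_det[OF outer1 run1] skip_run_det[OF outer2 run2] by simp_all
  with same init1 init2 have "c1 = c2"
    using skip_run_det by fastforce
  moreover have "c1 \<noteq> c2"
    using emits_distinct[OF s1 s2 differ i] C1 C2 by simp
  ultimately show False
    by contradiction
qed

lemma outer_witness: "has_memory_witness k B"
proof -
  define Q where "Q = {q. \<exists>p qp. CPair p qp q \<in> S}"
  define l' where "l' q = (THE j. \<exists>p qp. CPair p qp q \<in> S \<and> l (CPair p qp q) = j)" for q
  have l': "l' q = l (CPair p qp q)" if "CPair p qp q \<in> S" for p qp q
    unfolding l'_def by (rule the_equality) (use that outer_label_const in blast)+
  have "memory_witness k B a E Q l'"
  proof
    fix q q2 i b t b2 t2
    show "Q \<subseteq> states B"
      unfolding Q_def using subset_states by auto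
    show "q \<in> Q \<Longrightarrow> l' q \<in> {1..k}"
      unfolding Q_def using l' label_range by auto
    show "\<exists>q\<in>Q. l' q = i" if i: "i \<in> {1..k}"
    proof -
      obtain s where "s \<in> S" and "l s = i"
        using label_surj[OF i] by blast
      moreover from \<open>s \<in> S\<close> obtain p qp q where "s = CPair p qp q"
        by (rule S_memberE)
      ultimately show ?thesis
        unfolding Q_def using l' by auto
    qed
    show "q \<in> Q \<Longrightarrow> skip_run B (a (l' q)) (E (l' q)) (delta B q (a (l' q))) Acc"
      unfolding Q_def using l' accepts_CPair(2) by auto
    show "\<exists>b q'. q' \<in> Q \<and> l' q' = i \<and> skip_run B (a i) (E i) (delta B q (a i)) (Go b q')"
      if q: "q \<in> Q" and i: "i \<in> {1..k}" "i \<noteq> l' q"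
    proof -
      from q obtain p qp where s: "CPair p qp q \<in> S"
        unfolding Q_def by blast
      with i(2) have "i \<noteq> l (CPair p qp q)"
        by (simp add: l')
      then obtain b p' qp' q' where "CPair p' qp' q' \<in> S" and "l (CPair p' qp' q') = i"
        and "skip_run B (a i) (E i) (delta B q (a i)) (Go p' q')"
        using outer_move[OF s i(1) label_missing_from_fiber[OF s]] by blast
      then show ?thesis
        unfolding Q_def using l' by blast
    qed
    show "b \<noteq> b2"
      if q: "q \<in> Q" "q2 \<in> Q" and differ: "l' q \<noteq> l' q2" and runs: "i \<in> {1..k}"
        "skip_run B (a i) (E i) (delta B q (a i)) (Go b t)"
        "skip_run B (a i) (E i) (delta B q2 (a i)) (Go b2 t2)"
    proof -
      obtain p qp p2 qp2 where s: "CPair p qp q \<in> S" and s2: "CPair p2 qp2 q2 \<in> S"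
        using q unfolding Q_def by blast
      moreover from s s2 differ have "l (CPair p qp q) \<noteq> l (CPair p2 qp2 q2)"
        by (simp add: l')
      ultimately show ?thesis
        using runs by (rule outer_emits_distinct)
    qed
  qed
  then show ?thesis
    unfolding has_memory_witness_def by blast
qed

end

end

lemma has_memory_witness_compose_s:
  assumes "has_memory_witness k (compose_s \<Sigma>1 \<sigma> B)"
  shows "(\<exists>p\<in>alph B. has_memory_witness k (\<sigma> p)) \<or> has_memory_witness k B"
proof -
  obtain a Z S l where "composed_memory_witness k \<Sigma>1 \<sigma> B a Z S l"
    using assms unfolding has_memory_witness_def composed_memory_witness_def by blast
  then interpret composed_memory_witness k \<Sigma>1 \<sigma> B a Z S l .
  show ?thesis
  proof (cases "\<exists>p qp q. CPair p qp q \<in> S \<and>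
      (\<forall>j\<in>{1..k}. \<exists>qp'. CPair p qp' q \<in> S \<and> l (CPair p qp' q) = j)")
    case True
    then obtain p qp q where "CPair p qp q \<in> S"
      and full: "\<forall>j\<in>{1..k}. \<exists>qp'. CPair p qp' q \<in> S \<and> l (CPair p qp' q) = j"
      by blast
    moreover from \<open>CPair p qp q \<in> S\<close> have "p \<in> alph B"
      using subset_states by auto
    ultimately show ?thesis
      using inner_witness[OF full] unfolding has_memory_witness_def by blast
  next
    case False
    then show ?thesis
      using outer_witness by blast
  qed
qed

lemma Ck_no_memory_witness: "A \<in> Ck k \<Longrightarrow> \<not> has_memory_witness k A"
proof (induction rule: Ck.induct)
  case (base A)
  then show ?case
    using memory_witness.card_states_ge unfolding has_memory_witness_def wf_aut_def by fastforce
next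
  case (comp A T1 \<Sigma>1 \<tau> \<sigma>)
  then show ?case
    using has_memory_witness_compose_s[of k \<Sigma>1 \<sigma> "compose_t T1 \<tau> A"] has_memory_witness_compose_t
    unfolding compose_st_def by auto
qed

definition wf_transitions :: "kat_aut \<Rightarrow> bool" where
  "wf_transitions A \<longleftrightarrow>
     (\<forall>q\<in>states A. \<forall>\<alpha>\<subseteq>tests A. good_outcome (alph A) (states A) (delta A q \<alpha>)) \<and>
     (\<forall>\<alpha>\<subseteq>tests A. good_outcome (alph A) (states A) (iota A \<alpha>))"

lemma good_outcome_simps [simp]:
  "good_outcome \<Sigma> Q Acc" "good_outcome \<Sigma> Q Rej" "good_outcome \<Sigma> Q (Go p q) \<longleftrightarrow> p \<in> \<Sigma> \<and> q \<in> Q"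
  by (simp_all add: good_outcome_def)

lemma wf_aut_imp_wf_transitions: "wf_aut A \<Longrightarrow> wf_transitions A"
  by (simp add: wf_aut_def wf_transitions_def)

lemma wf_transitions_compose_t: "wf_transitions A \<Longrightarrow> wf_transitions (compose_t T1 \<tau> A)"
  by (simp add: wf_transitions_def tinv_def)

lemma skip_run_good:
  assumes "skip_run A \<alpha> Z out r" and "good_outcome (alph A) (states A) out"
    and "\<forall>q\<in>states A. good_outcome (alph A) (states A) (delta A q \<alpha>)"
  shows "good_outcome (alph A) (states A) r"
  using assms by (induction rule: skip_run.induct) auto

lemma hat_delta_good:
  assumes "wf_transitions A" and "q \<in> states A" and "\<alpha> \<subseteq> tests A"
  shows "good_outcome (alph A) (states A) (hat_delta A \<sigma> q \<alpha>)"
  using assms skip_run_good[OF hat_delta_skip_run[OF refl]]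
  unfolding wf_transitions_def by (cases "hat_delta A \<sigma> q \<alpha> = Rej") auto

lemma wf_transitions_compose_s:
  assumes B: "wf_transitions B"
    and \<sigma>: "\<And>p. p \<in> alph B \<Longrightarrow> wf_transitions (\<sigma> p) \<and> alph (\<sigma> p) = \<Sigma>1 \<and> tests (\<sigma> p) = tests B"
  shows "wf_transitions (compose_s \<Sigma>1 \<sigma> B)"
proof -
  let ?Q = "states (compose_s \<Sigma>1 \<sigma> B)"
  have start: "good_outcome \<Sigma>1 ?Q (case iota (\<sigma> p) \<alpha> of Go p' qp \<Rightarrow> Go p' (CPair p qp q) | _ \<Rightarrow> Rej)"
    if "p \<in> alph B" and "q \<in> states B" and "\<alpha> \<subseteq> tests B" for p q \<alpha>
    using that \<sigma>[OF that(1)] unfolding wf_transitions_def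
    by (cases "iota (\<sigma> p) \<alpha>") (auto dest!: spec[of _ \<alpha>])
  have "good_outcome \<Sigma>1 ?Q (comp_delta B \<sigma> s \<alpha>)" if s_in: "s \<in> ?Q" and \<alpha>: "\<alpha> \<subseteq> tests B" for s \<alpha>
  proof -
    obtain p qp q where s: "s = CPair p qp q" and p: "p \<in> alph B"
      and qp: "qp \<in> states (\<sigma> p)" and q: "q \<in> states B"
      using s_in by auto
    have "good_outcome \<Sigma>1 (states (\<sigma> p)) (delta (\<sigma> p) qp \<alpha>)"
      using \<sigma>[OF p] qp \<alpha> unfolding wf_transitions_def by auto
    moreover have "good_outcome (alph B) (states B) (hat_delta B \<sigma> q \<alpha>)"
      using hat_delta_good[OF B q \<alpha>] .
    ultimately show ?thesis
      using p qp q start[OF _ _ \<alpha>] unfolding s comp_delta_def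
      by (cases "delta (\<sigma> p) qp \<alpha>"; cases "hat_delta B \<sigma> q \<alpha>") auto
  qed
  moreover have "good_outcome \<Sigma>1 ?Q (comp_iota B \<sigma> \<alpha>)" if \<alpha>: "\<alpha> \<subseteq> tests B" for \<alpha>
  proof -
    have "good_outcome (alph B) (states B) (hat_iota B \<sigma> \<alpha>)"
      using B \<alpha> hat_delta_good[OF B _ \<alpha>] unfolding wf_transitions_def hat_iota_def
      by (auto split: outcome.split)
    then show ?thesis
      using start[OF _ _ \<alpha>] unfolding comp_iota_def
      by (cases "hat_iota B \<sigma> \<alpha>") auto
  qed
  ultimately show ?thesis
    unfolding wf_transitions_def by simp
qed

lemma Ck_wf_transitions: "A \<in> Ck k \<Longrightarrow> wf_transitions A"
proof (induction rule: Ck.induct)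
  case (base A)
  then show ?case
    by (simp add: wf_aut_imp_wf_transitions)
next
  case (comp A T1 \<Sigma>1 \<tau> \<sigma>)
  then show ?case
    unfolding compose_st_def
    by (intro wf_transitions_compose_s wf_transitions_compose_t) auto
qed

(* The continuations in L_k after the last atom read was alpha_j (initially j = 1). *)
inductive Lk_from :: "nat \<Rightarrow> nat \<Rightarrow> gstring \<Rightarrow> bool" for k where
  Lk_from_stop: "j \<in> {1..k} \<Longrightarrow> Lk_from k j ({j}, [])"
| Lk_from_step: "i \<in> {1..k} \<Longrightarrow> j \<in> {1..k} \<Longrightarrow> i \<noteq> j \<Longrightarrow> Lk_from k i (\<beta>, w) \<Longrightarrow>
    Lk_from k j ({i}, (j, \<beta>) # w)"

definition gs_from :: "nat \<Rightarrow> nat list \<Rightarrow> gstring" where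
  "gs_from j ns = ({hd ns}, zip (j # butlast ns) (map (\<lambda>i. {i}) (tl ns @ [last ns])))"

lemma gs_from_Cons:
  "ns \<noteq> [] \<Longrightarrow> gs_from i ns = (\<beta>, w) \<Longrightarrow> gs_from j (i # ns) = ({i}, (j, \<beta>) # w)"
  by (cases "ns") (auto simp: gs_from_def)

lemma Lk_from_gs_from:
  assumes "Lk_from k i (\<beta>, w)"
  shows "\<exists>ns. ns \<noteq> [] \<and> set ns \<subseteq> {1..k} \<and> hd ns = i \<and> distinct_adj ns \<and>
    (\<forall>j. gs_from j ns = ({i}, (j, \<beta>) # w))"
  using assms
proof (induction i "(\<beta>, w)" arbitrary: \<beta> w rule: Lk_from.induct)
  case (Lk_from_stop j)
  then show ?case
    by (intro exI[of _ "[j]"]) (auto simp: gs_from_def)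
next
  case (Lk_from_step i j \<beta>' w')
  then obtain ns where "ns \<noteq> []" "set ns \<subseteq> {1..k}" "hd ns = i" "distinct_adj ns"
    "\<forall>j. gs_from j ns = ({i}, (j, \<beta>') # w')"
    by blast
  with Lk_from_step.hyps(1-3) show ?case
    by (intro exI[of _ "j # ns"]) (auto simp: distinct_adj_Cons gs_from_Cons)
qed

lemma Lk_from_in_Lk:
  assumes "Lk_from k i (\<beta>, w)" and "i \<noteq> 1"
  shows "({i}, (1, \<beta>) # w) \<in> Lk k"
proof -
  obtain ns where ns: "ns \<noteq> []" "set ns \<subseteq> {1..k}" "hd ns = i" "distinct_adj ns"
    and gs: "gs_from 1 ns = ({i}, (1, \<beta>) # w)"
    using Lk_from_gs_from[OF assms(1)] by blast
  have "gs_of ns = ({i}, (1, \<beta>) # w)"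
    using gs by (simp add: gs_of_def gs_from_def)
  with ns assms(2) show ?thesis
    unfolding Lk_def distinct_adj_conv_nth by (intro CollectI exI[of _ ns]) auto
qed

inductive_cases lang_of_NilE: "lang_of A \<gamma> (\<alpha>, [])"
inductive_cases lang_of_ConsE: "lang_of A \<gamma> (\<alpha>, (p, \<beta>) # w)"

locale Lk_recognizer =
  fixes k :: nat and A :: kat_aut
  assumes Lk_subset: "Lk k \<subseteq> L A" and wf: "wf_transitions A" and tests: "tests A = {1..k}"
    and two: "2 \<le> k"
begin

definition remembers :: "kstate \<Rightarrow> nat \<Rightarrow> bool" where
  "remembers s j \<longleftrightarrow> j \<in> {1..k} \<and> (\<forall>x. Lk_from k j x \<longrightarrow> lang_of A (delta A s) x)"

lemma delta_good: "s \<in> states A \<Longrightarrow> i \<in> {1..k} \<Longrightarrow> good_outcome (alph A) (states A) (delta A s {i})"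
  using wf tests unfolding wf_transitions_def by auto

lemma remembers_accepts:
  assumes "remembers s j"
  shows "delta A s {j} = Acc"
proof -
  have "lang_of A (delta A s) ({j}, [])"
    using assms Lk_from_stop unfolding remembers_def by blast
  then show ?thesis
    by (rule lang_of_NilE)
qed

lemma remembers_step:
  assumes s: "s \<in> states A" and rem: "remembers s j" and i: "i \<in> {1..k}" "i \<noteq> j"
  obtains s' where "delta A s {i} = Go j s'" and "s' \<in> states A" and "remembers s' i"
proof -
  have j: "j \<in> {1..k}"
    using rem unfolding remembers_def by blast
  have "lang_of A (delta A s) ({i}, (j, \<beta>) # w)" if "Lk_from k i (\<beta>, w)" for \<beta> w
    using rem Lk_from_step[OF i(1) j i(2) that] unfolding remembers_def by blast
  then have runs: "\<exists>s'. delta A s {i} = Go j s' \<and> lang_of A (delta A s') (\<beta>, w)"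
    if "Lk_from k i (\<beta>, w)" for \<beta> w
    using that by (blast elim: lang_of_ConsE)
  then obtain s' where s': "delta A s {i} = Go j s'"
    using Lk_from_stop[OF i(1)] by blast
  show thesis
  proof
    show "delta A s {i} = Go j s'" by (fact s')
    show "s' \<in> states A"
      using delta_good[OF s i(1)] s' by simp
    show "remembers s' i"
      unfolding remembers_def using i(1) runs s' by auto
  qed
qed

lemma remembers_unique:
  assumes "remembers s j" and "remembers s j'"
  shows "j = j'"
proof (rule ccontr)
  assume "j \<noteq> j'"
  with assms have "Lk_from k j' ({j}, [(j', {j})])"
    unfolding remembers_def by (blast intro: Lk_from_step Lk_from_stop)
  with assms(2) have "lang_of A (delta A s) ({j}, [(j', {j})])"
    unfolding remembers_def by blast
  with remembers_accepts[OF assms(1)] show False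
    by (auto elim: lang_of_ConsE)
qed

lemma remembers_emits:
  assumes "s \<in> states A" and "remembers s j" and "i \<in> {1..k}" and "delta A s {i} = Go b t"
  shows "b = j"
proof (cases "i = j")
  case True
  then show ?thesis
    using assms(4) remembers_accepts[OF assms(2)] by simp
next
  case False
  then obtain s' where "delta A s {i} = Go j s'"
    using remembers_step[OF assms(1-3)] by blast
  then show ?thesis
    using assms(4) by simp
qed

lemma remembers_initial:
  obtains s0 where "s0 \<in> states A" and "remembers s0 2"
proof -
  have two_in: "2 \<in> {1..k}"
    using two by simp
  have "\<exists>s0. iota A {2} = Go 1 s0 \<and> lang_of A (delta A s0) (\<beta>, w)" if "Lk_from k 2 (\<beta>, w)" for \<beta> w
  proof -
    have "lang_of A (iota A) ({2}, (1, \<beta>) # w)"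
      using Lk_subset Lk_from_in_Lk[OF that] unfolding L_def by auto
    then show ?thesis
      by (auto elim: lang_of_ConsE)
  qed
  moreover obtain s0 where s0: "iota A {2} = Go 1 s0"
    using calculation Lk_from_stop[OF two_in] by blast
  ultimately have "remembers s0 2"
    unfolding remembers_def using two_in by auto
  moreover have "s0 \<in> states A"
  proof -
    have "good_outcome (alph A) (states A) (iota A {2})"
      using wf tests two_in unfolding wf_transitions_def by auto
    with s0 show ?thesis
      by simp
  qed
  ultimately show thesis
    using that by blast
qed

lemma memory_witness_exists: "has_memory_witness k A"
proof -
  define S where "S = {s \<in> states A. \<exists>j. remembers s j}"
  define l where "l s = (THE j. remembers s j)" for s
  have rem: "remembers s (l s)" if s: "s \<in> S" for s
  proof -
    obtain j where "remembers s j"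
      using s unfolding S_def by blast
    then show ?thesis
      unfolding l_def by (rule theI) (simp add: remembers_unique \<open>remembers s j\<close>)
  qed
  have l_eq: "l s = j" if "s \<in> S" and "remembers s j" for s j
    using rem that remembers_unique by blast
  have "memory_witness k A (\<lambda>i. {i}) (\<lambda>_ _. False) S l"
  proof
    fix s s' i b t b' t'
    show "S \<subseteq> states A"
      unfolding S_def by blast
    show "s \<in> S \<Longrightarrow> l s \<in> {1..k}"
      using rem unfolding remembers_def by blast
    show "\<exists>s\<in>S. l s = i" if i: "i \<in> {1..k}"
    proof -
      obtain s0 where s0: "s0 \<in> states A" "remembers s0 2"
        by (rule remembers_initial)
      have "\<exists>s\<in>states A. remembers s i"
      proof (cases "i = 2")
        case False
        then show ?thesis
          using remembers_step[OF s0 i] by metis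
      qed (use s0 in blast)
      then show ?thesis
        unfolding S_def using l_eq S_def by blast
    qed
    show "s \<in> S \<Longrightarrow> skip_run A {l s} (\<lambda>_. False) (delta A s {l s}) Acc"
      using rem remembers_accepts by (simp add: skip_run_no_skips)
    show "\<exists>b s'. s' \<in> S \<and> l s' = i \<and> skip_run A {i} (\<lambda>_. False) (delta A s {i}) (Go b s')"
      if s: "s \<in> S" and i: "i \<in> {1..k}" "i \<noteq> l s"
    proof -
      obtain s' where "delta A s {i} = Go (l s) s'" and "s' \<in> states A" and "remembers s' i"
        using remembers_step[OF _ rem[OF s] i] s unfolding S_def by blast
      then show ?thesis
        unfolding S_def using l_eq S_def by (auto simp: skip_run_no_skips)
    qed
    show "b \<noteq> b'"
      if s: "s \<in> S" "s' \<in> S" and differ: "l s \<noteq> l s'" and i: "i \<in> {1..k}"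
        and runs: "skip_run A {i} (\<lambda>_. False) (delta A s {i}) (Go b t)"
          "skip_run A {i} (\<lambda>_. False) (delta A s' {i}) (Go b' t')"
    proof -
      have "delta A s {i} = Go b t" and "delta A s' {i} = Go b' t'"
        using runs by (auto simp: skip_run_no_skips)
      then have "b = l s" and "b' = l s'"
        using s remembers_emits[OF _ rem i] unfolding S_def by blast+
      with differ show ?thesis
        by simp
    qed
  qed
  then show ?thesis
    unfolding has_memory_witness_def by blast
qed

end

theorem theorem6p15:
  fixes k :: nat and A :: kat_aut
  assumes "k > 1"
    and "A \<in> Ck k"
    and "alph A = {1..k}" and "tests A = {1..k}"
  shows "L A \<noteq> Lk k"
proof
  assume "L A = Lk k"
  (* Only the inclusion of Lk k matters. *)
  with assms have "Lk_recognizer k A"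
    by unfold_locales (auto simp: Ck_wf_transitions)
  then have "has_memory_witness k A"
    by (rule Lk_recognizer.memory_witness_exists)
  with Ck_no_memory_witness[OF assms(2)] show False
    by contradiction
qed

end
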